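(* Let $a$ be a positive integer and $N>0$. Then \[ \mathcal{E}_a(N)=\bigcup_{d\mid a}\{\,d\,n':\ n'\in\mathcal{E}^*_{a/d}(N/d)\,\} \] (the union over positive divisors $d$ of $a$), and consequently \[ E_a(N)=\sum_{d\mid a}E^*_{a/d}(N/d). \]
   Context: For a positive integer $b$ and a positive integer $n$, let $R(n;b)$ denote the number of pairs $(x,y)$ of positive integers with $\frac{b}{n}=\frac1x+\frac1y$. Let $\mathcal{E}_b=\{n\in\mathbb{N}: R(n;b)=0\}$ and $\mathcal{E}^*_b=\{n\in\mathcal{E}_b:\gcd(n,b)=1\}$. For real $x>0$ let $\mathcal{E}_b(x)=\{n\in\mathcal{E}_b:n\le x\}$, $\mathcal{E}^*_b(x)=\{n\in\mathcal{E}^*_b:n\le x\}$, $E_b(x)=\#\mathcal{E}_b(x)$ and $E^*_b(x)=\#\mathcal{E}^*_b(x)$. *)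

theory Defs
  imports "HOL-Analysis.Analysis"
begin

definition R :: "nat \<Rightarrow> nat \<Rightarrow> nat" where
  "R n b = card {(x::nat, y::nat). x > 0 \<and> y > 0 \<and>
      real b / real n = 1 / real x + 1 / real y}"

definition ExcSet :: "nat \<Rightarrow> nat set" where
  "ExcSet b = {n::nat. n > 0 \<and> R n b = 0}"

definition ExcSetStar :: "nat \<Rightarrow> nat set" where
  "ExcSetStar b = {n \<in> ExcSet b. coprime n b}"

definition ExcUpto :: "nat \<Rightarrow> real \<Rightarrow> nat set" where
  "ExcUpto b x = {n \<in> ExcSet b. real n \<le> x}"

definition ExcStarUpto :: "nat \<Rightarrow> real \<Rightarrow> nat set" where
  "ExcStarUpto b x = {n \<in> ExcSetStar b. real n \<le> x}"

definition E :: "nat \<Rightarrow> real \<Rightarrow> nat" where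
  "E b x = card (ExcUpto b x)"

definition EStar :: "nat \<Rightarrow> real \<Rightarrow> nat" where
  "EStar b x = card (ExcStarUpto b x)"

end

theory Submission
  imports Defs
begin

text \<open>Since b/n depends only on the reduced fraction, n is exceptional for a iff n/d is
  exceptional for a/d, for every common divisor d of n and a. Taking d = gcd n a makes n/d
  coprime to a/d, so every exceptional n is d n' with d | a and n' exceptional and coprime
  for a/d; this representation is unique because d is recovered as gcd (d n') a.\<close>

lemma R_mult_cancel:
  assumes "d > 0"
  shows "R (d * n) (d * b) = R n b"
proof -
  have "real (d * b) / real (d * n) = real b / real n"
    using assms by simp
  then show ?thesis
    unfolding R_def by simp
qed

lemma mult_mem_ExcUpto_iff:
  assumes "d > 0"
  shows "d * n \<in> ExcUpto (d * b) x \<longleftrightarrow> n \<in> ExcUpto b (x / real d)"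
proof -
  have "real (d * n) \<le> x \<longleftrightarrow> real n \<le> x / real d"
    using assms by (simp add: field_simps)
  then show ?thesis
    using assms by (simp add: ExcUpto_def ExcSet_def R_mult_cancel)
qed

lemma ExcStarUpto_eq: "ExcStarUpto b x = {n \<in> ExcUpto b x. coprime n b}"
  by (auto simp: ExcStarUpto_def ExcSetStar_def ExcUpto_def)

lemma finite_ExcStarUpto: "finite (ExcStarUpto b x)"
proof (rule finite_subset)
  show "ExcStarUpto b x \<subseteq> {..nat \<lceil>x\<rceil>}"
    unfolding ExcStarUpto_def
    by (auto simp: le_nat_iff intro: le_ceiling_iff[THEN iffD2]
        dest: order_trans[OF _ le_of_int_ceiling])
qed simp

lemma gcd_mult_coprime_nat:
  assumes "coprime n b"
  shows "gcd (d * n) (d * b) = (d::nat)"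
  using assms by (metis coprime_iff_gcd_eq_1 gcd_mult_distrib_nat mult.right_neutral)

lemma ExcUpto_eq_UN_ExcStarUpto:
  assumes "a > 0"
  shows "ExcUpto a N = (\<Union>d\<in>{d. d dvd a}. (\<lambda>n'. d * n') ` ExcStarUpto (a div d) (N / real d))"
    (is "_ = (\<Union>d\<in>_. ?piece d)")
proof (rule set_eqI, rule iffI)
  fix n
  assume n: "n \<in> ExcUpto a N"
  define d where "d = gcd n a"
  have d: "d > 0" "d dvd a" "d dvd n"
    using assms by (simp_all add: d_def)
  have a_eq: "a = d * (a div d)" and n_eq: "n = d * (n div d)"
    using d by simp_all
  have "n div d \<in> ExcUpto (a div d) (N / real d)"
    using n d(1) mult_mem_ExcUpto_iff[of d "n div d" "a div d" N] a_eq n_eq by simp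
  moreover have "coprime (n div d) (a div d)"
    unfolding d_def using assms by (intro div_gcd_coprime) auto
  ultimately have "n div d \<in> ExcStarUpto (a div d) (N / real d)"
    by (simp add: ExcStarUpto_eq)
  then show "n \<in> (\<Union>d\<in>{d. d dvd a}. ?piece d)"
    using d(2) n_eq by blast
next
  fix n
  assume "n \<in> (\<Union>d\<in>{d. d dvd a}. ?piece d)"
  then obtain d n' where d: "d dvd a" and n_eq: "n = d * n'"
    and n': "n' \<in> ExcStarUpto (a div d) (N / real d)"
    by blast
  have "d > 0" and a_eq: "a = d * (a div d)"
    using d assms by (auto intro: dvd_pos_nat)
  then show "n \<in> ExcUpto a N"
    using n' n_eq mult_mem_ExcUpto_iff[of d n' "a div d" N] by (simp add: ExcStarUpto_eq)
qed

lemma disjoint_ExcStarUpto_images: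
  assumes "a > 0" "i dvd a" "j dvd a" "i \<noteq> j"
  shows "(\<lambda>n'. i * n') ` ExcStarUpto (a div i) (N / real i)
       \<inter> (\<lambda>n'. j * n') ` ExcStarUpto (a div j) (N / real j) = {}"
proof (rule ccontr)
  assume "\<not> ?thesis"
  then obtain x y where x: "x \<in> ExcStarUpto (a div i) (N / real i)"
    and y: "y \<in> ExcStarUpto (a div j) (N / real j)" and xy: "i * x = j * y"
    by blast
  have "gcd (i * x) a = i"
    using gcd_mult_coprime_nat[of x "a div i" i] x assms(2) by (simp add: ExcStarUpto_eq)
  moreover have "gcd (j * y) a = j"
    using gcd_mult_coprime_nat[of y "a div j" j] y assms(3) by (simp add: ExcStarUpto_eq)
  ultimately show False
    using xy assms(4) by simp
qed

lemma card_mult_image_ExcStarUpto: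
  assumes "d > 0"
  shows "card ((\<lambda>n'. d * n') ` ExcStarUpto b x) = EStar b x"
proof -
  have "inj_on (\<lambda>n'. d * n') (ExcStarUpto b x)"
    using assms by (auto simp: inj_on_def)
  then show ?thesis
    by (simp add: card_image EStar_def)
qed

theorem lemma2p1:
  fixes a :: nat and N :: real
  assumes "a > 0" and "N > 0"
  shows "ExcUpto a N = (\<Union>d\<in>{d. d dvd a}. (\<lambda>n'. d * n') ` ExcStarUpto (a div d) (N / real d))
         \<and> E a N = (\<Sum>d\<in>{d. d dvd a}. EStar (a div d) (N / real d))"
proof
  show decomp: "ExcUpto a N = (\<Union>d\<in>{d. d dvd a}. (\<lambda>n'. d * n') ` ExcStarUpto (a div d) (N / real d))"
    using assms(1) by (rule ExcUpto_eq_UN_ExcStarUpto)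
  have "E a N = (\<Sum>d\<in>{d. d dvd a}. card ((\<lambda>n'. d * n') ` ExcStarUpto (a div d) (N / real d)))"
    unfolding E_def decomp
    using assms(1) finite_ExcStarUpto disjoint_ExcStarUpto_images
    by (intro card_UN_disjoint) auto
  also have "\<dots> = (\<Sum>d\<in>{d. d dvd a}. EStar (a div d) (N / real d))"
    using assms(1) by (intro sum.cong refl card_mult_image_ExcStarUpto) (auto intro: dvd_pos_nat)
  finally show "E a N = (\<Sum>d\<in>{d. d dvd a}. EStar (a div d) (N / real d))" .
qed

end
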